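(* Let $\mathcal J_1=(J_1,R_1,\sigma_1)$ and $\mathcal J_2=(J_2,R_2,\sigma_2)$ form a generalized Kähler structure on a real $4$-dimensional Lie algebra $\mathfrak g$, and assume neither $\mathcal J_1$ nor $\mathcal J_2$ is of type $2$. Then either $\mathcal J_1$ and $\mathcal J_2$ are both of type $0$, or both are of type $1$; in the latter case $\operatorname{Im}R_1\cap\operatorname{Im}R_2=\{0\}$.
   Context: Let $\mathfrak g$ be a real finite-dimensional Lie algebra, $\Phi(\mathfrak g)=\mathfrak g\oplus\mathfrak g^*$ with the neutral pairing $\langle u+\alpha,v+\beta\rangle=\tfrac12(\alpha(v)+\beta(u))$ and the bracket $[u+\alpha,v+\beta]=[u,v]+\mathrm{ad}_u^t\beta-\mathrm{ad}_v^t\alpha$, where $(\mathrm{ad}_u^t\alpha)(v)=-\alpha([u,v])$. A generalized complex structure on $\mathfrak g$ is an endomorphism $K$ of $\Phi(\mathfrak g)$ with $K^2=-\mathrm{Id}$, $\langle Ka,b\rangle+\langle a,Kb\rangle=0$ for all $a,b$, and vanishing Nijenhuis torsion $N_K(a,b)=[Ka,Kb]-K[Ka,b]-K[a,Kb]+K^2[a,b]$; it is written $K=\begin{pmatrix}J&R\\ \sigma&-J^*\end{pmatrix}$ and denoted $(J,R,\sigma)$. Its type is $\tfrac12\dim(\operatorname{Im}R)^0$; in dimension 4 type 0 means $R$ invertible, type 1 means $\operatorname{rank}R=2$, type 2 means $R=0$. A generalized Kähler structure on $\mathfrak g$ is a pair of commuting generalized complex structures $\mathcal J_1,\mathcal J_2$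 such that the symmetric form $G(u,v)=\langle\mathcal J_1\mathcal J_2u,v\rangle$ on $\Phi(\mathfrak g)$ is positive definite. *)

theory Defs
  imports "HOL-Analysis.Analysis"
begin

text \<open>The Lie algebra g is modelled as R^4 (type real^4) with a bracket br.
  The dual g* is also modelled as real^4, a covector alpha acting by alpha(v) = alpha \<bullet> v.
  Phi(g) = g (+) g* is modelled as real^4 \<times> real^4.\<close>

type_synonym vec4 = "real^4"
type_synonym phi4 = "vec4 \<times> vec4"

definition lie_algebra :: "(vec4 \<Rightarrow> vec4 \<Rightarrow> vec4) \<Rightarrow> bool" where
  "lie_algebra br \<longleftrightarrow> bilinear br \<and> (\<forall>u. br u u = 0) \<and>
     (\<forall>u v w. br u (br v w) + br v (br w u) + br w (br u v) = 0)"

definition adt :: "(vec4 \<Rightarrow> vec4 \<Rightarrow> vec4) \<Rightarrow> vec4 \<Rightarrow> vec4 \<Rightarrow> vec4" where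
  "adt br u \<alpha> = (\<chi> i. - (\<alpha> \<bullet> br u (axis i 1)))"

definition phi_pair :: "phi4 \<Rightarrow> phi4 \<Rightarrow> real" where
  "phi_pair a b = ((snd a) \<bullet> (fst b) + (snd b) \<bullet> (fst a)) / 2"

definition phi_bracket :: "(vec4 \<Rightarrow> vec4 \<Rightarrow> vec4) \<Rightarrow> phi4 \<Rightarrow> phi4 \<Rightarrow> phi4" where
  "phi_bracket br a b =
     (br (fst a) (fst b), adt br (fst a) (snd b) - adt br (fst b) (snd a))"

definition nijenhuis :: "(vec4 \<Rightarrow> vec4 \<Rightarrow> vec4) \<Rightarrow> (phi4 \<Rightarrow> phi4) \<Rightarrow> phi4 \<Rightarrow> phi4 \<Rightarrow> phi4" where
  "nijenhuis br K a b = phi_bracket br (K a) (K b) - K (phi_bracket br (K a) b)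
      - K (phi_bracket br a (K b)) + K (K (phi_bracket br a b))"

definition gen_complex :: "(vec4 \<Rightarrow> vec4 \<Rightarrow> vec4) \<Rightarrow> (phi4 \<Rightarrow> phi4) \<Rightarrow> bool" where
  "gen_complex br K \<longleftrightarrow> linear K \<and> (\<forall>a. K (K a) = - a) \<and>
     (\<forall>a b. phi_pair (K a) b + phi_pair a (K b) = 0) \<and>
     (\<forall>a b. nijenhuis br K a b = 0)"

text \<open>The block R : g* \<rightarrow> g of K = (J R; sigma -J*).\<close>
definition gc_R :: "(phi4 \<Rightarrow> phi4) \<Rightarrow> vec4 \<Rightarrow> vec4" where
  "gc_R K \<alpha> = fst (K (0, \<alpha>))"

definition gc_type :: "(phi4 \<Rightarrow> phi4) \<Rightarrow> nat" where
  "gc_type K = dim {\<alpha>::vec4. \<forall>x \<in> range (gc_R K). \<alpha> \<bullet> x = 0} div 2"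

definition gen_kahler :: "(vec4 \<Rightarrow> vec4 \<Rightarrow> vec4) \<Rightarrow> (phi4 \<Rightarrow> phi4) \<Rightarrow> (phi4 \<Rightarrow> phi4) \<Rightarrow> bool" where
  "gen_kahler br K1 K2 \<longleftrightarrow> gen_complex br K1 \<and> gen_complex br K2 \<and>
     (\<forall>a. K1 (K2 a) = K2 (K1 a)) \<and>
     (\<forall>a. a \<noteq> 0 \<longrightarrow> phi_pair (K1 (K2 a)) a > 0)"

end

theory Submission
  imports Defs
begin

text \<open>The statement is linear algebra. \<open>G = K\<^sub>1 K\<^sub>2\<close> is an
  involution of \<open>\<Phi>(\<gg>)\<close>, symmetric and positive for the pairing. Its two eigenspaces are
  graphs over \<open>\<gg>\<^sup>*\<close> and are preserved by \<open>K\<^sub>1\<close>, so \<open>K\<^sub>1\<close> induces two complex structures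
  \<open>J\<^sub>\<plusminus>\<close> on \<open>\<gg>\<^sup>*\<close>, orthogonal for the metric \<open>S\<close> that \<open>G\<close> induces there. Comparing
  \<open>\<gg>\<close>-components gives \<open>ker R\<^sub>1 = {J\<^sub>+ = J\<^sub>-}\<close> and \<open>ker R\<^sub>2 = {J\<^sub>+ = -J\<^sub>-}\<close>, and as \<open>R\<^sub>i\<close> is
  skew, the type of \<open>K\<^sub>i\<close> is \<open>dim (ker R\<^sub>i) / 2\<close>. Two orthogonal complex structures on a
  Euclidean 4-space that agree on some \<open>a \<noteq> 0\<close> also agree on \<open>J a\<close> and preserve the plane
  orthogonal to both, where one is \<open>\<plusminus>\<close> the other; so they coincide or the space splits into
  the planes \<open>{J = K} \<oplus> {J = -K}\<close>. Finally \<open>Im R\<^sub>i \<perp> ker R\<^sub>i\<close>, so \<open>Im R\<^sub>1 \<inter> Im R\<^sub>2\<close> is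
  orthogonal to \<open>ker R\<^sub>1 + ker R\<^sub>2\<close>.\<close>

locale pos_def_operator =
  fixes S :: "'a::euclidean_space \<Rightarrow> 'a"
  assumes linear_S: "linear S"
    and S_sym: "x \<bullet> S y = y \<bullet> S x"
    and S_pos: "x \<noteq> 0 \<Longrightarrow> 0 < x \<bullet> S x"
begin

lemma S_self_eq_0_iff: "x \<bullet> S x = 0 \<longleftrightarrow> x = 0"
  using S_pos[of x] by force

lemma independent_if_S_orthogonal:
  assumes "finite B" "0 \<notin> B" and orth: "\<And>x y. x \<in> B \<Longrightarrow> y \<in> B \<Longrightarrow> x \<noteq> y \<Longrightarrow> x \<bullet> S y = 0"
  shows "independent B"
proof (rule independent_if_scalars_zero[OF \<open>finite B\<close>])
  fix f x assume sum0: "(\<Sum>y\<in>B. f y *\<^sub>R y) = 0" and x: "x \<in> B"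
  have "0 = x \<bullet> S (\<Sum>y\<in>B. f y *\<^sub>R y)"
    by (simp add: sum0 linear_0[OF linear_S])
  also have "\<dots> = (\<Sum>y\<in>B. f y * (x \<bullet> S y))"
    by (simp add: linear_sum[OF linear_S] linear_scale[OF linear_S] inner_sum_right)
  also have "\<dots> = f x * (x \<bullet> S x) + (\<Sum>y\<in>B - {x}. f y * (x \<bullet> S y))"
    using \<open>finite B\<close> x by (simp add: sum.remove)
  also have "(\<Sum>y\<in>B - {x}. f y * (x \<bullet> S y)) = 0"
    by (rule sum.neutral) (use orth x in auto)
  finally show "f x = 0"
    using S_self_eq_0_iff x \<open>0 \<notin> B\<close> by auto
qed

lemma eq_0_if_S_orthogonal_to_spanning:
  assumes "span B = UNIV" "\<And>x. x \<in> B \<Longrightarrow> u \<bullet> S x = 0"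
  shows "u = 0"
proof -
  have "linear (\<lambda>x. u \<bullet> S x)"
    using linear_compose[OF linear_S bounded_linear.linear[OF bounded_linear_inner_right]]
    by (simp add: o_def)
  then have "u \<bullet> S u = 0"
    using linear_eq_0_on_span[of "\<lambda>x. u \<bullet> S x" B u] assms by simp
  then show ?thesis by (simp add: S_self_eq_0_iff)
qed

definition orth_cx :: "('a \<Rightarrow> 'a) \<Rightarrow> bool" where
  "orth_cx J \<longleftrightarrow> linear J \<and> (\<forall>x. J (J x) = - x) \<and> (\<forall>x y. J x \<bullet> S (J y) = x \<bullet> S y)"

lemma orth_cx_linear: "orth_cx J \<Longrightarrow> linear J"
  and orth_cx_square: "orth_cx J \<Longrightarrow> J (J x) = - x"
  and orth_cx_isometry: "orth_cx J \<Longrightarrow> J x \<bullet> S (J y) = x \<bullet> S y"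
  by (simp_all add: orth_cx_def)

lemma orth_cx_adjoint:
  assumes "orth_cx J" shows "J x \<bullet> S y = - (x \<bullet> S (J y))"
proof -
  have "J x \<bullet> S y = J x \<bullet> S (J (- J y))"
    using assms by (simp add: orth_cx_def linear_neg)
  also have "\<dots> = - (x \<bullet> S (J y))"
    using assms by (simp add: orth_cx_def linear_neg[OF linear_S])
  finally show ?thesis .
qed

lemma orth_cx_skew:
  assumes "orth_cx J" shows "x \<bullet> S (J x) = 0"
  using orth_cx_adjoint[OF assms, of x x] S_sym[of "J x" x] by simp

lemma orth_cx_eq_0_iff:
  assumes "orth_cx J" shows "J x = 0 \<longleftrightarrow> x = 0"
  using assms unfolding orth_cx_def by (metis linear_0 neg_equal_0_iff_equal)

lemma orth_cx_uminus:
  assumes "orth_cx J" shows "orth_cx (\<lambda>x. - J x)"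
  using assms by (simp add: orth_cx_def linear_compose_neg linear_neg linear_neg[OF linear_S])

lemma subspace_Collect_eq:
  assumes "linear f" "linear g" shows "subspace {x. f x = g x}"
  using assms by (auto simp: subspace_def linear_0 linear_add linear_scale)

lemma two_le_dim_orth_cx_agreement:
  assumes J: "orth_cx J" and K: "orth_cx K" and a: "J a = K a" "a \<noteq> 0"
  shows "2 \<le> dim {x. J x = K x}"
proof -
  have Ja: "J a \<noteq> 0"
    using a(2) orth_cx_eq_0_iff[OF J] by simp
  have orth: "a \<bullet> S (J a) = 0" "J a \<bullet> S a = 0"
    using orth_cx_skew[OF J, of a] S_sym[of "J a" a] by simp_all
  have ne: "a \<noteq> J a"
  proof
    assume "a = J a"
    then have "a \<bullet> S a = 0" using orth(1) by simp
    then show False using a(2) S_self_eq_0_iff by simp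
  qed
  have "independent {a, J a}"
  proof (rule independent_if_S_orthogonal)
    show "finite {a, J a}" by simp
    show "0 \<notin> {a, J a}" using a(2) Ja by simp
    show "x \<bullet> S y = 0" if "x \<in> {a, J a}" "y \<in> {a, J a}" "x \<noteq> y" for x y
      using that orth by blast
  qed
  moreover have "J (J a) = K (J a)"
    using a(1) orth_cx_square[OF J, of a] orth_cx_square[OF K, of a] by simp
  then have "{a, J a} \<subseteq> {x. J x = K x}"
    using a(1) by simp
  ultimately have "card {a, J a} \<le> dim {x. J x = K x}"
    by (rule independent_card_le_dim[rotated])
  then show ?thesis
    using ne by simp
qed

lemma exists_S_orthogonal_to_pair:
  assumes "2 < DIM('a)"
  obtains y where "y \<noteq> 0" "y \<bullet> S a = 0" "y \<bullet> S b = 0"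
proof -
  have "dim {S a, S b} \<le> 2"
    using dim_le_card'[of "{S a, S b}"] card_insert_le_m1[of 2 "{S b}" "S a"] by simp
  then obtain y where "y \<noteq> 0" "\<And>x. x \<in> span {S a, S b} \<Longrightarrow> orthogonal y x"
    using orthogonal_to_subspace_exists[of "{S a, S b}"] assms by auto
  then show thesis
    using that by (simp add: orthogonal_def span_base)
qed

lemma eq_scaleR_if_S_orthogonal_to_complement:
  assumes span: "span (insert z B) = UNIV" and "z \<noteq> 0"
    and z_orth: "\<And>x. x \<in> B \<Longrightarrow> z \<bullet> S x = 0" and w_orth: "\<And>x. x \<in> B \<Longrightarrow> w \<bullet> S x = 0"
  shows "w = (w \<bullet> S z / (z \<bullet> S z)) *\<^sub>R z"
proof -
  define c where "c = w \<bullet> S z / (z \<bullet> S z)"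
  have "(w - c *\<^sub>R z) \<bullet> S z = 0"
    using S_pos[OF \<open>z \<noteq> 0\<close>] by (simp add: c_def inner_diff_left)
  moreover have "(w - c *\<^sub>R z) \<bullet> S x = 0" if "x \<in> B" for x
    using z_orth[OF that] w_orth[OF that] by (simp add: inner_diff_left)
  ultimately have "w - c *\<^sub>R z = 0"
    using eq_0_if_S_orthogonal_to_spanning[OF span] by blast
  then show ?thesis
    by (simp add: c_def)
qed

context
  assumes dim4: "DIM('a) = 4"
begin

lemma span_S_orthogonal_quadruple:
  assumes nz: "a \<noteq> 0" "b \<noteq> 0" "y \<noteq> 0" "z \<noteq> 0"
    and orth: "a \<bullet> S b = 0" "a \<bullet> S y = 0" "a \<bullet> S z = 0"
      "b \<bullet> S y = 0" "b \<bullet> S z = 0" "y \<bullet> S z = 0"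
  shows "span {a, b, y, z} = UNIV"
proof -
  have orth': "b \<bullet> S a = 0" "y \<bullet> S a = 0" "z \<bullet> S a = 0"
      "y \<bullet> S b = 0" "z \<bullet> S b = 0" "z \<bullet> S y = 0"
    using orth S_sym by metis+
  have "a \<noteq> b" "a \<noteq> y" "a \<noteq> z" "b \<noteq> y" "b \<noteq> z" "y \<noteq> z"
    using nz orth S_self_eq_0_iff by metis+
  then have card: "card {a, b, y, z} = 4" by simp
  have "independent {a, b, y, z}"
    by (rule independent_if_S_orthogonal) (use nz orth orth' in auto)
  then have "dim {a, b, y, z} = DIM('a)"
    using dim_span_eq_card_independent card dim4 by (metis dim_span)
  then show ?thesis by (simp add: dim_eq_full)
qed

text \<open>The \<open>S\<close>-orthogonal complement of \<open>span {a, J a}\<close> is a plane invariant under both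
  structures, on which \<open>K\<close> is again an orthogonal complex structure, hence \<open>\<plusminus>J\<close>.\<close>

lemma orth_cx_frame:
  assumes J: "orth_cx J" and K: "orth_cx K" and a: "J a = K a" "a \<noteq> 0"
    and y: "y \<noteq> 0" "y \<bullet> S a = 0" "y \<bullet> S (J a) = 0"
  shows "span {a, J a, y, J y} = UNIV" and "K y = J y \<or> K y = - J y"
proof -
  define b where "b = J a"
  define z where "z = J y"
  have nz: "b \<noteq> 0" "z \<noteq> 0"
    using a(2) y(1) orth_cx_eq_0_iff[OF J] by (simp_all add: b_def z_def)
  have ab: "a \<bullet> S b = 0" and yz: "y \<bullet> S z = 0"
    using orth_cx_skew[OF J] by (simp_all add: b_def z_def)
  have az: "a \<bullet> S z = 0"
    using orth_cx_adjoint[OF J, of a y] y(3) S_sym by (simp add: z_def)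
  have bz: "b \<bullet> S z = 0"
    using orth_cx_isometry[OF J, of a y] y(2) S_sym by (simp add: b_def z_def)
  have y_orth: "a \<bullet> S y = 0" "b \<bullet> S y = 0"
    using y S_sym by (metis b_def)+
  have span: "span {a, b, y, z} = UNIV"
    by (rule span_S_orthogonal_quadruple) (use a y nz ab y_orth az bz yz in auto)
  then show "span {a, J a, y, J y} = UNIV"
    by (simp add: b_def z_def)
  have "K y \<bullet> S x = 0" if "x \<in> {a, b, y}" for x
  proof -
    have "a \<bullet> S (K y) = 0"
      using orth_cx_adjoint[OF K, of a y] y(3) S_sym a(1) by simp
    moreover have "b \<bullet> S (K y) = 0"
      using orth_cx_isometry[OF K, of a y] y_orth(1) a(1) by (simp add: b_def)
    moreover have "y \<bullet> S (K y) = 0"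
      using orth_cx_skew[OF K] .
    ultimately show ?thesis
      using that S_sym by auto
  qed
  moreover have "insert z {a, b, y} = {a, b, y, z}" by auto
  ultimately obtain c where Ky: "K y = c *\<^sub>R z"
    using eq_scaleR_if_S_orthogonal_to_complement[of z "{a, b, y}" "K y"] span nz(2) az bz yz S_sym
    by (metis empty_iff insertE)
  have "c\<^sup>2 * (z \<bullet> S z) = K y \<bullet> S (K y)"
    by (simp add: Ky linear_scale[OF linear_S] power2_eq_square)
  also have "\<dots> = z \<bullet> S z"
    using orth_cx_isometry[OF K, of y y] orth_cx_isometry[OF J, of y y] by (simp add: z_def)
  finally have "c = 1 \<or> c = -1"
    using S_pos[OF nz(2)] by (simp add: power2_eq_1_iff)
  then show "K y = J y \<or> K y = - J y"
    using Ky by (auto simp: z_def)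
qed

lemma orth_cx_eq_or_split:
  assumes J: "orth_cx J" and K: "orth_cx K" and a: "J a = K a" "a \<noteq> 0"
  shows "K = J \<or> {e + f |e f. J e = K e \<and> J f = - K f} = UNIV"
proof -
  obtain y where y: "y \<noteq> 0" "y \<bullet> S a = 0" "y \<bullet> S (J a) = 0"
    using exists_S_orthogonal_to_pair dim4 by auto
  note frame = orth_cx_frame[OF J K a y]
  have on_a: "J x = K x" if "x \<in> {a, J a}" for x
    using that a(1) orth_cx_square[OF J, of a] orth_cx_square[OF K, of a] by auto
  from frame(2) show ?thesis
  proof
    assume Ky: "K y = J y"
    then have "J x = K x" if "x \<in> {a, J a, y, J y}" for x
      using that on_a orth_cx_square[OF J, of y] orth_cx_square[OF K, of y] by auto
    then have "J x = K x" for x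
      using linear_eq_on_span[OF orth_cx_linear[OF J] orth_cx_linear[OF K]] frame(1) by blast
    then show ?thesis by auto
  next
    assume Ky: "K y = - J y"
    have on_y: "J x = - K x" if "x \<in> {y, J y}" for x
      using that Ky orth_cx_square[OF J, of y] orth_cx_square[OF K, of y]
        linear_neg[OF orth_cx_linear[OF K], of "J y"] by auto
    have "v \<in> {e + f |e f. J e = K e \<and> J f = - K f}" for v
    proof -
      have "{a, J a} \<union> {y, J y} = {a, J a, y, J y}" by auto
      then have "v \<in> span ({a, J a} \<union> {y, J y})"
        using frame(1) by simp
      then obtain e f where v: "v = e + f" "e \<in> span {a, J a}" "f \<in> span {y, J y}"
        unfolding span_Un by blast
      have "J e = K e"
        using linear_eq_on_span[OF orth_cx_linear[OF J] orth_cx_linear[OF K]] on_a v(2) by blast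
      moreover have "J f = - K f"
        using linear_eq_on_span[OF orth_cx_linear[OF J] linear_compose_neg[OF orth_cx_linear[OF K]]]
          on_y v(3) by blast
      ultimately show ?thesis
        using v(1) by blast
    qed
    then show ?thesis by blast
  qed
qed

lemma orth_cx_agreement_split:
  assumes J: "orth_cx J" and K: "orth_cx K" and "K \<noteq> J" and P: "{x. J x = K x} \<noteq> {0}"
  shows "{e + f |e f. J e = K e \<and> J f = - K f} = UNIV" and "{x. J x = - K x} \<noteq> {0}"
proof -
  have "J 0 = K 0"
    using linear_0[OF orth_cx_linear[OF J]] linear_0[OF orth_cx_linear[OF K]] by simp
  then obtain a where "J a = K a" "a \<noteq> 0"
    using P by blast
  then show split: "{e + f |e f. J e = K e \<and> J f = - K f} = UNIV"
    using orth_cx_eq_or_split[OF J K] \<open>K \<noteq> J\<close> by blast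
  show "{x. J x = - K x} \<noteq> {0}"
  proof
    assume M0: "{x. J x = - K x} = {0}"
    have "J x = K x" for x
    proof -
      obtain e f where "x = e + f" "J e = K e" "J f = - K f"
        using split by blast
      moreover have "f = 0"
        using M0 \<open>J f = - K f\<close> by blast
      ultimately show ?thesis by simp
    qed
    then show False
      using \<open>K \<noteq> J\<close> by auto
  qed
qed

lemma orth_cx_pair_dichotomy:
  assumes J: "orth_cx J" and K: "orth_cx K" and "K \<noteq> J" "(\<lambda>x. - K x) \<noteq> J"
  defines "P \<equiv> {x. J x = K x}" and "M \<equiv> {x. J x = - K x}"
  shows "P = {0} \<and> M = {0} \<or> dim P = 2 \<and> dim M = 2 \<and> {e + f |e f. e \<in> P \<and> f \<in> M} = UNIV"
proof (cases "P = {0}")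
  case True
  then have "M = {0}"
    using orth_cx_agreement_split(2)[OF J orth_cx_uminus[OF K] \<open>(\<lambda>x. - K x) \<noteq> J\<close>]
    unfolding P_def M_def by auto
  with True show ?thesis by simp
next
  case False
  have split: "{e + f |e f. e \<in> P \<and> f \<in> M} = UNIV" and "M \<noteq> {0}"
    using orth_cx_agreement_split[OF J K \<open>K \<noteq> J\<close>] False unfolding P_def M_def by auto
  have subspaces: "subspace P" "subspace M"
    unfolding P_def M_def
    using subspace_Collect_eq orth_cx_linear J K orth_cx_uminus by blast+
  have "P \<inter> M \<subseteq> {0}"
  proof
    fix x assume "x \<in> P \<inter> M"
    then have "J x = K x" "J x = - K x"
      unfolding P_def M_def by auto
    then have "K x = - K x"
      by simp
    then have "2 *\<^sub>R K x = 0"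
      by (simp add: scaleR_2 eq_neg_iff_add_eq_0)
    then show "x \<in> {0}"
      using orth_cx_eq_0_iff[OF K] by simp
  qed
  then have "dim (P \<inter> M) = 0"
    by simp
  then have "dim P + dim M = 4"
    using dim_sums_Int[OF subspaces] split dim4 by (simp del: dim_eq_0)
  moreover have "2 \<le> dim P" "2 \<le> dim M"
    using False \<open>M \<noteq> {0}\<close> subspaces subspace_0
      two_le_dim_orth_cx_agreement[OF J K] two_le_dim_orth_cx_agreement[OF J orth_cx_uminus[OF K]]
    unfolding P_def M_def by blast+
  ultimately show ?thesis
    using split by simp
qed

end

end

lemma phi_pair_commute: "phi_pair a b = phi_pair b a"
  by (simp add: phi_pair_def algebra_simps)

lemma phi_pair_add_left: "phi_pair (a + b) c = phi_pair a c + phi_pair b c"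
  and phi_pair_add_right: "phi_pair c (a + b) = phi_pair c a + phi_pair c b"
  and phi_pair_scaleR_left: "phi_pair (r *\<^sub>R a) c = r * phi_pair a c"
  and phi_pair_scaleR_right: "phi_pair c (r *\<^sub>R a) = r * phi_pair c a"
  by (simp_all add: phi_pair_def inner_add_left inner_add_right algebra_simps add_divide_distrib)

lemma phi_pair_minus_right: "phi_pair c (- a) = - phi_pair c a"
  using phi_pair_scaleR_right[of c "-1" a] by simp

lemma phi_pair_covector_right: "phi_pair a (0, \<beta>) = (\<beta> \<bullet> fst a) / 2"
  by (simp add: phi_pair_def)

lemma phi_pair_self_eq_0_if_fst_eq_0: "fst a = 0 \<Longrightarrow> phi_pair a a = 0"
  by (simp add: phi_pair_def)

lemma linear_gc_R: "linear K \<Longrightarrow> linear (gc_R K)"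
proof -
  assume "linear K"
  moreover have "linear (\<lambda>\<alpha>::vec4. (0::vec4, \<alpha>))"
    by (rule linearI) auto
  ultimately show ?thesis
    unfolding gc_R_def[abs_def]
    using linear_compose[of "\<lambda>\<alpha>. K (0, \<alpha>)" fst] linear_compose linear_fst by (auto simp: o_def)
qed

lemma gc_R_skew:
  assumes "\<And>a b. phi_pair (K a) b + phi_pair a (K b) = 0"
  shows "\<beta> \<bullet> gc_R K \<alpha> = - (\<alpha> \<bullet> gc_R K \<beta>)"
  using assms[of "(0, \<alpha>)" "(0, \<beta>)"] by (simp add: phi_pair_def gc_R_def)

lemma annihilator_range_eq_kernel_if_skew:
  fixes R :: "'a::real_inner \<Rightarrow> 'a"
  assumes skew: "\<And>\<alpha> \<beta>. \<beta> \<bullet> R \<alpha> = - (\<alpha> \<bullet> R \<beta>)"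
  shows "{\<alpha>. \<forall>x \<in> range R. \<alpha> \<bullet> x = 0} = {\<alpha>. R \<alpha> = 0}"
proof (intro set_eqI iffI; simp)
  fix \<alpha> assume "\<forall>x. \<alpha> \<bullet> R x = 0"
  then have "R \<alpha> \<bullet> R \<alpha> = 0"
    using skew by (metis neg_equal_0_iff_equal)
  then show "R \<alpha> = 0" by simp
next
  fix \<alpha> assume "R \<alpha> = 0"
  then show "\<forall>x. \<alpha> \<bullet> R x = 0"
    using skew by (metis inner_zero_right neg_0_equal_iff_equal)
qed

lemma gc_type_eq_dim_kernel:
  assumes "\<And>a b. phi_pair (K a) b + phi_pair a (K b) = 0"
  shows "gc_type K = dim {\<alpha>. gc_R K \<alpha> = 0} div 2"
  unfolding gc_type_def
  using annihilator_range_eq_kernel_if_skew[OF gc_R_skew[OF assms]] by simp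

lemma range_Int_eq_0_if_kernels_span:
  fixes R1 R2 :: "'a::real_inner \<Rightarrow> 'a"
  assumes skew1: "\<And>\<alpha> \<beta>. \<beta> \<bullet> R1 \<alpha> = - (\<alpha> \<bullet> R1 \<beta>)"
    and skew2: "\<And>\<alpha> \<beta>. \<beta> \<bullet> R2 \<alpha> = - (\<alpha> \<bullet> R2 \<beta>)"
    and span: "{e + f |e f. R1 e = 0 \<and> R2 f = 0} = UNIV"
  shows "range R1 \<inter> range R2 = {0}"
proof (intro set_eqI iffI)
  fix x assume "x \<in> range R1 \<inter> range R2"
  then obtain \<alpha> \<beta> where x: "x = R1 \<alpha>" "x = R2 \<beta>" by blast
  obtain e f where ef: "x = e + f" "R1 e = 0" "R2 f = 0"
    using span by blast
  have "e \<bullet> x = 0" "f \<bullet> x = 0"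
    using x ef skew1[of \<alpha> e] skew2[of \<beta> f] by simp_all
  then have "x \<bullet> x = 0"
    using ef(1) by (simp add: inner_add_left)
  then show "x \<in> {0}" by simp
next
  fix x :: 'a assume "x \<in> {0}"
  moreover have "R1 0 = 0" "R2 0 = 0"
    using skew1[of 0 "R1 0"] skew2[of 0 "R2 0"] by simp_all
  ultimately show "x \<in> range R1 \<inter> range R2"
    by (metis IntI rangeI singletonD)
qed

locale linear_gen_kahler =
  fixes K1 K2 :: "phi4 \<Rightarrow> phi4"
  assumes linear_K1: "linear K1" and linear_K2: "linear K2"
    and K1_square: "K1 (K1 a) = - a" and K2_square: "K2 (K2 a) = - a"
    and K1_skew: "phi_pair (K1 a) b + phi_pair a (K1 b) = 0"
    and K2_skew: "phi_pair (K2 a) b + phi_pair a (K2 b) = 0"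
    and K1_K2_commute: "K1 (K2 a) = K2 (K1 a)"
    and positive: "a \<noteq> 0 \<Longrightarrow> 0 < phi_pair (K1 (K2 a)) a"
begin

definition G :: "phi4 \<Rightarrow> phi4" where
  "G a = K1 (K2 a)"

definition S :: "vec4 \<Rightarrow> vec4" where
  "S \<alpha> = fst (G (0, \<alpha>))"

text \<open>\<open>U \<epsilon>\<close> maps \<open>\<gg>\<^sup>*\<close> isomorphically onto the \<open>\<epsilon>\<close>-eigenspace of \<open>G\<close> (\<open>\<epsilon> = \<plusminus>1\<close>), and
  \<open>J \<epsilon>\<close> is \<open>K\<^sub>1\<close> transported along it (lemma \<open>U_J\<close>); its definition is read off from
  the first component of \<open>K\<^sub>1 (U \<epsilon> \<alpha>)\<close>.\<close>

definition U :: "real \<Rightarrow> vec4 \<Rightarrow> phi4" where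
  "U \<epsilon> \<beta> = (0, \<beta>) + \<epsilon> *\<^sub>R G (0, \<beta>)"

definition J :: "real \<Rightarrow> vec4 \<Rightarrow> vec4" where
  "J \<epsilon> \<alpha> = inv S (\<epsilon> *\<^sub>R (gc_R K1 \<alpha> - \<epsilon> *\<^sub>R gc_R K2 \<alpha>))"

lemma linear_G: "linear G"
  unfolding G_def[abs_def] using linear_compose[OF linear_K2 linear_K1] by (simp add: o_def)

lemma G_G: "G (G a) = a"
  by (simp add: G_def K1_K2_commute[symmetric] K1_square K2_square linear_neg[OF linear_K1])

lemma G_K1: "G (K1 a) = K1 (G a)"
  by (simp add: G_def K1_K2_commute)

lemma phi_pair_K1_K1: "phi_pair (K1 a) (K1 b) = phi_pair a b"
  using K1_skew[of a "K1 b"] by (simp add: K1_square phi_pair_minus_right)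

lemma phi_pair_K2_K2: "phi_pair (K2 a) (K2 b) = phi_pair a b"
  using K2_skew[of a "K2 b"] by (simp add: K2_square phi_pair_minus_right)

lemma phi_pair_G_left: "phi_pair (G a) b = phi_pair a (G b)"
proof -
  have "phi_pair (K1 (K2 a)) b = - phi_pair (K2 a) (K1 b)"
    using K1_skew[of "K2 a" b] by simp
  also have "\<dots> = phi_pair a (K2 (K1 b))"
    using K2_skew[of a "K1 b"] by simp
  finally show ?thesis by (simp add: G_def K1_K2_commute)
qed

lemma phi_pair_G_G: "phi_pair (G a) (G b) = phi_pair a b"
  by (simp add: G_def phi_pair_K1_K1 phi_pair_K2_K2)

lemma phi_pair_G_covectors: "phi_pair (G (0, \<alpha>)) (0, \<beta>) = (\<beta> \<bullet> S \<alpha>) / 2"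
  by (simp add: phi_pair_covector_right S_def)

lemma S_linear: "linear S"
proof -
  have "linear (\<lambda>\<alpha>::vec4. (0::vec4, \<alpha>))"
    by (rule linearI) auto
  then show ?thesis
    unfolding S_def[abs_def]
    using linear_compose[OF linear_compose[OF _ linear_G] linear_fst] by (simp add: o_def)
qed

lemma S_symmetric: "\<alpha> \<bullet> S \<beta> = \<beta> \<bullet> S \<alpha>"
  using phi_pair_G_left[of "(0, \<alpha>)" "(0, \<beta>)"] phi_pair_commute[of "(0, \<alpha>)"]
    phi_pair_G_covectors[of \<alpha> \<beta>] phi_pair_G_covectors[of \<beta> \<alpha>] by simp

lemma S_positive: "\<alpha> \<noteq> 0 \<Longrightarrow> 0 < \<alpha> \<bullet> S \<alpha>"
  using positive[of "(0, \<alpha>)"] phi_pair_G_covectors[of \<alpha> \<alpha>] by (simp add: G_def zero_prod_def)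

sublocale pos_def_operator S
  by (intro pos_def_operator.intro S_linear S_symmetric S_positive)

lemma inj_S: "inj S"
proof (rule injI)
  fix x y assume "S x = S y"
  then have "(x - y) \<bullet> S (x - y) = 0"
    by (simp add: linear_diff[OF linear_S])
  then show "x = y"
    using S_self_eq_0_iff by simp
qed

lemma S_inv_S: "S (inv S x) = x"
  using surj_f_inv_f[OF linear_inj_imp_surj[OF linear_S inj_S]] .

lemma linear_J: "linear (J \<epsilon>)"
proof -
  have "linear (\<lambda>\<alpha>. \<epsilon> *\<^sub>R (gc_R K1 \<alpha> - \<epsilon> *\<^sub>R gc_R K2 \<alpha>))"
    using linear_gc_R[OF linear_K1] linear_gc_R[OF linear_K2]
    by (intro linear_compose_scale_right linear_compose_sub) auto
  then show ?thesis
    unfolding J_def[abs_def]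
    using linear_compose[OF _ inj_linear_imp_inv_linear[OF linear_S inj_S]] by (simp add: o_def)
qed

lemma S_J: "S (J \<epsilon> \<alpha>) = \<epsilon> *\<^sub>R (gc_R K1 \<alpha> - \<epsilon> *\<^sub>R gc_R K2 \<alpha>)"
  by (simp add: J_def S_inv_S)

text \<open>A vector of an eigenspace of \<open>G\<close> is determined by its \<open>\<gg>\<close>-component, since the
  pairing vanishes on \<open>\<gg>\<^sup>*\<close> while \<open>phi_pair (G d) d\<close> is positive.\<close>

lemma eigenvector_eq_if_fst_eq:
  assumes "G c = \<epsilon> *\<^sub>R c" "G c' = \<epsilon> *\<^sub>R c'" "fst c = fst c'"
  shows "c = c'"
proof (rule ccontr)
  assume "c \<noteq> c'"
  then have "0 < phi_pair (G (c - c')) (c - c')"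
    using positive[of "c - c'"] by (simp add: G_def)
  moreover have "G (c - c') = \<epsilon> *\<^sub>R (c - c')"
    using assms by (simp add: linear_diff[OF linear_G] scaleR_diff_right)
  moreover have "phi_pair (c - c') (c - c') = 0"
    using assms(3) by (intro phi_pair_self_eq_0_if_fst_eq_0) simp
  ultimately show False
    by (simp add: phi_pair_scaleR_left)
qed

context
  fixes \<epsilon> :: real
  assumes \<epsilon>: "\<epsilon> * \<epsilon> = 1"
begin

lemma G_U: "G (U \<epsilon> \<beta>) = \<epsilon> *\<^sub>R U \<epsilon> \<beta>"
  by (simp add: U_def linear_add[OF linear_G] linear_scale[OF linear_G] G_G scaleR_add_right \<epsilon>)

lemma fst_U: "fst (U \<epsilon> \<beta>) = \<epsilon> *\<^sub>R S \<beta>"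
  by (simp add: U_def S_def)

lemma U_J: "U \<epsilon> (J \<epsilon> \<alpha>) = K1 (U \<epsilon> \<alpha>)"
proof (rule eigenvector_eq_if_fst_eq)
  show "G (U \<epsilon> (J \<epsilon> \<alpha>)) = \<epsilon> *\<^sub>R U \<epsilon> (J \<epsilon> \<alpha>)"
    by (rule G_U)
  show "G (K1 (U \<epsilon> \<alpha>)) = \<epsilon> *\<^sub>R K1 (U \<epsilon> \<alpha>)"
    by (simp add: G_K1 G_U linear_scale[OF linear_K1])
  have "fst (K1 (U \<epsilon> \<alpha>)) = gc_R K1 \<alpha> - \<epsilon> *\<^sub>R gc_R K2 \<alpha>"
    by (simp add: U_def linear_add[OF linear_K1] linear_scale[OF linear_K1] G_def K1_square gc_R_def)
  then show "fst (U \<epsilon> (J \<epsilon> \<alpha>)) = fst (K1 (U \<epsilon> \<alpha>))"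
    by (simp add: fst_U S_J \<epsilon>)
qed

lemma U_eq_iff: "U \<epsilon> x = U \<epsilon> y \<longleftrightarrow> x = y"
proof
  assume "U \<epsilon> x = U \<epsilon> y"
  then have "\<epsilon> *\<^sub>R S x = \<epsilon> *\<^sub>R S y"
    using fst_U by metis
  then have "S x = S y"
    using \<epsilon> by (metis scaleR_cancel_left mult_zero_left zero_neq_one)
  then show "x = y"
    using inj_S by (simp add: inj_eq)
qed simp

lemma U_minus: "U \<epsilon> (- x) = - U \<epsilon> x"
  using linear_neg[OF linear_G, of "(0, x)"] by (simp add: U_def)

lemma phi_pair_U_U: "phi_pair (U \<epsilon> \<alpha>) (U \<epsilon> \<beta>) = \<epsilon> * (\<beta> \<bullet> S \<alpha>)"
proof -
  have cross: "phi_pair (0, \<alpha>) (G (0, \<beta>)) = (\<beta> \<bullet> S \<alpha>) / 2"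
    using phi_pair_G_left[of "(0, \<alpha>)" "(0, \<beta>)"] phi_pair_G_covectors by simp
  have G_G_covectors: "phi_pair (G (0, \<alpha>)) (G (0, \<beta>)) = 0"
    unfolding phi_pair_G_G by (simp add: phi_pair_def)
  have covectors: "phi_pair (0, \<alpha>) (0, \<beta>) = 0"
    by (simp add: phi_pair_def)
  have "phi_pair (U \<epsilon> \<alpha>) (U \<epsilon> \<beta>) = phi_pair (0, \<alpha>) (0, \<beta>) + \<epsilon> * phi_pair (0, \<alpha>) (G (0, \<beta>))
      + \<epsilon> * phi_pair (G (0, \<alpha>)) (0, \<beta>) + \<epsilon> * \<epsilon> * phi_pair (G (0, \<alpha>)) (G (0, \<beta>))"
    by (simp add: U_def phi_pair_add_left phi_pair_add_right phi_pair_scaleR_left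
        phi_pair_scaleR_right algebra_simps)
  also have "\<dots> = \<epsilon> * (\<beta> \<bullet> S \<alpha>)"
    unfolding cross G_G_covectors covectors phi_pair_G_covectors by (simp add: field_simps)
  finally show ?thesis .
qed

lemma orth_cx_J: "orth_cx (J \<epsilon>)"
  unfolding orth_cx_def
proof (intro conjI allI)
  show "linear (J \<epsilon>)" by (rule linear_J)
  fix x y
  show "J \<epsilon> (J \<epsilon> x) = - x"
    by (simp add: U_eq_iff[symmetric] U_J K1_square U_minus)
  have "\<epsilon> * (J \<epsilon> x \<bullet> S (J \<epsilon> y)) = phi_pair (U \<epsilon> (J \<epsilon> y)) (U \<epsilon> (J \<epsilon> x))"
    by (rule phi_pair_U_U[symmetric])
  also have "\<dots> = phi_pair (U \<epsilon> y) (U \<epsilon> x)"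
    by (simp only: U_J phi_pair_K1_K1)
  also have "\<dots> = \<epsilon> * (x \<bullet> S y)"
    by (rule phi_pair_U_U)
  finally show "J \<epsilon> x \<bullet> S (J \<epsilon> y) = x \<bullet> S y"
    using \<epsilon> by auto
qed

end

lemma J_eq_iff_kernel_K1: "J 1 \<alpha> = J (-1) \<alpha> \<longleftrightarrow> gc_R K1 \<alpha> = 0"
proof -
  have "J 1 \<alpha> = J (-1) \<alpha> \<longleftrightarrow> S (J 1 \<alpha>) = S (J (-1) \<alpha>)"
    using inj_S by (simp add: inj_eq)
  also have "\<dots> \<longleftrightarrow> 2 *\<^sub>R gc_R K1 \<alpha> = 0"
    by (simp add: S_J scaleR_2 algebra_simps eq_neg_iff_add_eq_0)
  finally show ?thesis by simp
qed

lemma J_eq_minus_iff_kernel_K2: "J 1 \<alpha> = - J (-1) \<alpha> \<longleftrightarrow> gc_R K2 \<alpha> = 0"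
proof -
  have "J 1 \<alpha> = - J (-1) \<alpha> \<longleftrightarrow> S (J 1 \<alpha>) = S (- J (-1) \<alpha>)"
    using inj_S by (simp add: inj_eq)
  also have "\<dots> \<longleftrightarrow> 2 *\<^sub>R gc_R K2 \<alpha> = 0"
    by (simp add: S_J linear_neg[OF linear_S] scaleR_2 algebra_simps eq_neg_iff_add_eq_0)
  finally show ?thesis by simp
qed


lemma kernels_gc_R_dichotomy:
  assumes "{\<alpha>. gc_R K1 \<alpha> = 0} \<noteq> UNIV" and "{\<alpha>. gc_R K2 \<alpha> = 0} \<noteq> UNIV"
  shows "{\<alpha>. gc_R K1 \<alpha> = 0} = {0} \<and> {\<alpha>. gc_R K2 \<alpha> = 0} = {0} \<or>
    dim {\<alpha>. gc_R K1 \<alpha> = 0} = 2 \<and> dim {\<alpha>. gc_R K2 \<alpha> = 0} = 2 \<and>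
    {e + f |e f. gc_R K1 e = 0 \<and> gc_R K2 f = 0} = UNIV"
proof -
  have kernels: "{\<alpha>. gc_R K1 \<alpha> = 0} = {\<alpha>. J 1 \<alpha> = J (-1) \<alpha>}"
    "{\<alpha>. gc_R K2 \<alpha> = 0} = {\<alpha>. J 1 \<alpha> = - J (-1) \<alpha>}"
    by (simp_all add: J_eq_iff_kernel_K1 J_eq_minus_iff_kernel_K2)
  have "J (-1) \<noteq> J 1"
  proof
    assume "J (-1) = J 1"
    then show False
      using assms(1) unfolding kernels by simp
  qed
  moreover have "(\<lambda>\<alpha>. - J (-1) \<alpha>) \<noteq> J 1"
  proof
    assume opposite: "(\<lambda>\<alpha>. - J (-1) \<alpha>) = J 1"
    show False
      using assms(2) fun_cong[OF opposite] unfolding kernels by simp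
  qed
  moreover have "orth_cx (J 1)" "orth_cx (J (-1))"
    by (simp_all add: orth_cx_J)
  ultimately show ?thesis
    using orth_cx_pair_dichotomy[of "J 1" "J (-1)"]
    by (simp add: J_eq_iff_kernel_K1 J_eq_minus_iff_kernel_K2)
qed
end

lemma linear_gen_kahler_if_gen_kahler:
  assumes "gen_kahler br K1 K2" shows "linear_gen_kahler K1 K2"
  using assms unfolding gen_kahler_def gen_complex_def linear_gen_kahler_def by blast

theorem proposition4p1:
  fixes br :: "vec4 \<Rightarrow> vec4 \<Rightarrow> vec4" and K1 K2 :: "phi4 \<Rightarrow> phi4"
  assumes "lie_algebra br"
    and "gen_kahler br K1 K2"
    and "gc_type K1 \<noteq> 2" and "gc_type K2 \<noteq> 2"
  shows "(gc_type K1 = 0 \<and> gc_type K2 = 0) \<or>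
         (gc_type K1 = 1 \<and> gc_type K2 = 1 \<and> range (gc_R K1) \<inter> range (gc_R K2) = {0})"
proof -
  interpret linear_gen_kahler K1 K2
    using assms(2) by (rule linear_gen_kahler_if_gen_kahler)
  have types: "gc_type K1 = dim {\<alpha>. gc_R K1 \<alpha> = 0} div 2" "gc_type K2 = dim {\<alpha>. gc_R K2 \<alpha> = 0} div 2"
    using gc_type_eq_dim_kernel[OF K1_skew] gc_type_eq_dim_kernel[OF K2_skew] by simp_all
  then have "{\<alpha>. gc_R K1 \<alpha> = 0} \<noteq> UNIV" "{\<alpha>. gc_R K2 \<alpha> = 0} \<noteq> UNIV"
    using assms(3,4) by auto
  from kernels_gc_R_dichotomy[OF this] show ?thesis
  proof
    assume "{\<alpha>. gc_R K1 \<alpha> = 0} = {0} \<and> {\<alpha>. gc_R K2 \<alpha> = 0} = {0}"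
    then show ?thesis using types by simp
  next
    assume planes: "dim {\<alpha>. gc_R K1 \<alpha> = 0} = 2 \<and> dim {\<alpha>. gc_R K2 \<alpha> = 0} = 2 \<and>
      {e + f |e f. gc_R K1 e = 0 \<and> gc_R K2 f = 0} = UNIV"
    then have "range (gc_R K1) \<inter> range (gc_R K2) = {0}"
      using range_Int_eq_0_if_kernels_span[OF gc_R_skew[OF K1_skew] gc_R_skew[OF K2_skew]] by simp
    with planes show ?thesis using types by simp
  qed
qed

end
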